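(* Let $K$ be a finite subset of $\mathbb{R}^3$. Then $Extr(K^{cc})\subset K$.
   Context: A horizontal segment is one contained in a plane $\{z=c\}$; a vertical segment is one parallel to the $z$ axis. A $2+1$-complex is a closed subset of $\mathbb{R}^3$ that is the union of a finite list $L$ of elements, each of one of the following kinds: points; relatively open horizontal segments whose two endpoints belong to $L$; relatively open vertical segments whose two endpoints belong to $L$; relatively open triangles in a horizontal plane whose three boundary segments belong to $L$; relatively open rectangles in a vertical plane, two of whose sides are parallel to the $z$ axis, whose four boundary segments belong to $L$; open subsets of $\mathbb{R}^3$ whose boundary is a union of elements of the previous kinds, all belonging to $L$. For any $M\subset\mathbb{R}^3$, a point $p\in M$ is extremal if no relatively open horizontal or vertical segment contained in $M$ contains $p$; $Extr(M)$ is the set of extremal points of $M$. $K^{cc}=\bigcup\{L: L\text{ a } 2+1\text{-complex with } Extr(L)\subset K\}$. *)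

theory Defs
  imports "HOL-Analysis.Analysis"
begin

type_synonym pt = "real ^ 3"

text \<open>Coordinates: x = v$1, y = v$2, z = v$3.\<close>

definition e3 :: pt where "e3 = axis 3 1"

definition horiz_seg :: "pt \<Rightarrow> pt \<Rightarrow> bool" where
  "horiz_seg a b \<longleftrightarrow> a \<noteq> b \<and> a$3 = b$3"

definition vert_seg :: "pt \<Rightarrow> pt \<Rightarrow> bool" where
  "vert_seg a b \<longleftrightarrow> a \<noteq> b \<and> a$1 = b$1 \<and> a$2 = b$2"

definition low_elem :: "pt set set \<Rightarrow> pt set \<Rightarrow> bool" where
  "low_elem L E \<longleftrightarrow>
     (\<exists>p. E = {p}) \<or>
     (\<exists>a b. (horiz_seg a b \<or> vert_seg a b) \<and> E = open_segment a b \<and> {a} \<in> L \<and> {b} \<in> L) \<or>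
     (\<exists>a b c. \<not> collinear {a, b, c} \<and> a$3 = b$3 \<and> b$3 = c$3 \<and>
        E = rel_interior (convex hull {a, b, c}) \<and>
        open_segment a b \<in> L \<and> open_segment b c \<in> L \<and> open_segment a c \<in> L) \<or>
     (\<exists>a b h. horiz_seg a b \<and> h \<noteq> 0 \<and>
        E = rel_interior (convex hull {a, b, b + h *\<^sub>R e3, a + h *\<^sub>R e3}) \<and>
        open_segment a b \<in> L \<and> open_segment (a + h *\<^sub>R e3) (b + h *\<^sub>R e3) \<in> L \<and>
        open_segment a (a + h *\<^sub>R e3) \<in> L \<and> open_segment b (b + h *\<^sub>R e3) \<in> L)"

definition elem :: "pt set set \<Rightarrow> pt set \<Rightarrow> bool" where
  "elem L E \<longleftrightarrow> low_elem L E \<or>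
     (open E \<and> bounded E \<and> (\<exists>S \<subseteq> L. (\<forall>F\<in>S. low_elem L F) \<and> frontier E = \<Union>S))"

definition complex21 :: "pt set \<Rightarrow> bool" where
  "complex21 C \<longleftrightarrow> closed C \<and>
     (\<exists>L. finite L \<and> (\<forall>E\<in>L. elem L E) \<and> C = \<Union>L)"

definition extremal :: "pt set \<Rightarrow> pt \<Rightarrow> bool" where
  "extremal M p \<longleftrightarrow> p \<in> M \<and>
     \<not> (\<exists>a b. (horiz_seg a b \<or> vert_seg a b) \<and> open_segment a b \<subseteq> M \<and> p \<in> open_segment a b)"

definition Extr :: "pt set \<Rightarrow> pt set" where
  "Extr M = {p. extremal M p}"

definition cc_hull :: "pt set \<Rightarrow> pt set" where
  "cc_hull K = \<Union>{C. complex21 C \<and> Extr C \<subseteq> K}"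

end

theory Submission
  imports Defs
begin

lemma extremal_subset:
  assumes "extremal M p" "C \<subseteq> M" "p \<in> C"
  shows "extremal C p"
  using assms unfolding extremal_def by blast

lemma Extr_Union_subset: "Extr (\<Union>\<C>) \<subseteq> (\<Union>C\<in>\<C>. Extr C)"
proof
  fix p assume "p \<in> Extr (\<Union>\<C>)"
  then have extr: "extremal (\<Union>\<C>) p" by (simp add: Extr_def)
  then obtain C where "C \<in> \<C>" "p \<in> C" by (auto simp: extremal_def)
  with extr have "extremal C p" by (blast intro: extremal_subset)
  with \<open>C \<in> \<C>\<close> show "p \<in> (\<Union>C\<in>\<C>. Extr C)" by (auto simp: Extr_def)
qed

theorem lemma2p7:
  fixes K :: "(real ^ 3) set"
  assumes "finite K"
  shows "Extr (cc_hull K) \<subseteq> K"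
proof -
  let ?\<C> = "{C. complex21 C \<and> Extr C \<subseteq> K}"
  have "Extr (cc_hull K) \<subseteq> (\<Union>C\<in>?\<C>. Extr C)"
    unfolding cc_hull_def by (rule Extr_Union_subset)
  also have "\<dots> \<subseteq> K" by blast
  finally show ?thesis .
qed

end
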